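(* Let $D\ge1$, let $Q_D$ be the $D$-dimensional hypercube on $X=\{0,1\}^D$ with adjacency matrix $A$, and let $E_1V$ be the eigenspace of $A$ in $V=\mathbb{R}^X$ for the eigenvalue $D-2$. Every antisymmetric $A$-like matrix $B$ leaves $E_1V$ invariant, and the restriction map $B\mapsto B|_{E_1V}$ is a bijection from the space of antisymmetric $A$-like matrices onto the space of linear maps $T:E_1V\to E_1V$ satisfying $\langle Tu,w\rangle=-\langle u,Tw\rangle$ for all $u,w\in E_1V$.
   Context: $Q_D$ is the graph with vertex set $X=\{0,1\}^D$, two vertices adjacent iff they differ in exactly one coordinate. Matrices are real with rows and columns indexed by $X$ and act on $V=\mathbb{R}^X$, equipped with the standard inner product $\langle u,w\rangle=u^tw$. A matrix $B$ is $A$-like if $BA=AB$ and $B_{xy}=0$ for all $x,y\in X$ that are neither equal nor adjacent; it is antisymmetric if $B^t=-B$. *)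

theory Defs
  imports Complex_Main "HOL-Library.FuncSet"
begin

text \<open>Matrices are real functions on
pairs of vertices, vectors real functions on vertices; both are required to vanish
outside the vertex set so that they are uniquely determined by their entries on X.\<close>

type_synonym vtx = "bool list"
type_synonym mat = "vtx \<Rightarrow> vtx \<Rightarrow> real"
type_synonym vec = "vtx \<Rightarrow> real"

definition hcube :: "nat \<Rightarrow> vtx set" where
  "hcube D = {x. length x = D}"

definition hadj :: "nat \<Rightarrow> vtx \<Rightarrow> vtx \<Rightarrow> bool" where
  "hadj D x y \<longleftrightarrow> x \<in> hcube D \<and> y \<in> hcube D \<and> card {i. i < D \<and> x ! i \<noteq> y ! i} = 1"

definition adjmat :: "nat \<Rightarrow> mat" where
  "adjmat D x y = (if hadj D x y then 1 else 0)"

definition is_mat :: "nat \<Rightarrow> mat \<Rightarrow> bool" where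
  "is_mat D B \<longleftrightarrow> (\<forall>x y. (x \<notin> hcube D \<or> y \<notin> hcube D) \<longrightarrow> B x y = 0)"

definition is_vec :: "nat \<Rightarrow> vec \<Rightarrow> bool" where
  "is_vec D v \<longleftrightarrow> (\<forall>x. x \<notin> hcube D \<longrightarrow> v x = 0)"

definition matmul :: "nat \<Rightarrow> mat \<Rightarrow> mat \<Rightarrow> mat" where
  "matmul D B C x y = (if x \<in> hcube D \<and> y \<in> hcube D then (\<Sum>z\<in>hcube D. B x z * C z y) else 0)"

definition mulvec :: "nat \<Rightarrow> mat \<Rightarrow> vec \<Rightarrow> vec" where
  "mulvec D B v x = (if x \<in> hcube D then (\<Sum>y\<in>hcube D. B x y * v y) else 0)"

definition inprod :: "nat \<Rightarrow> vec \<Rightarrow> vec \<Rightarrow> real" where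
  "inprod D u w = (\<Sum>x\<in>hcube D. u x * w x)"

definition A_like :: "nat \<Rightarrow> mat \<Rightarrow> bool" where
  "A_like D B \<longleftrightarrow> matmul D B (adjmat D) = matmul D (adjmat D) B \<and>
     (\<forall>x\<in>hcube D. \<forall>y\<in>hcube D. x \<noteq> y \<and> \<not> hadj D x y \<longrightarrow> B x y = 0)"

definition antisym_mat :: "nat \<Rightarrow> mat \<Rightarrow> bool" where
  "antisym_mat D B \<longleftrightarrow> (\<forall>x\<in>hcube D. \<forall>y\<in>hcube D. B y x = - B x y)"

definition antisym_A_like :: "nat \<Rightarrow> mat set" where
  "antisym_A_like D = {B. is_mat D B \<and> A_like D B \<and> antisym_mat D B}"

definition E1 :: "nat \<Rightarrow> vec set" where
  "E1 D = {v. is_vec D v \<and> mulvec D (adjmat D) v = (\<lambda>x. (real D - 2) * v x)}"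

definition skew_maps_E1 :: "nat \<Rightarrow> (vec \<Rightarrow> vec) set" where
  "skew_maps_E1 D = {T. T \<in> extensional (E1 D) \<and> T \<in> E1 D \<rightarrow> E1 D \<and>
     (\<forall>u\<in>E1 D. \<forall>w\<in>E1 D. T (\<lambda>x. u x + w x) = (\<lambda>x. T u x + T w x)) \<and>
     (\<forall>c. \<forall>u\<in>E1 D. T (\<lambda>x. c * u x) = (\<lambda>x. c * T u x)) \<and>
     (\<forall>u\<in>E1 D. \<forall>w\<in>E1 D. inprod D (T u) w = - inprod D u (T w))}"

end

theory Submission
  imports Defs
begin

text \<open>The characters \<open>\<chi>_S(x) = \<Prod>i\<in>S. (-1)^x_i\<close> form an orthogonal eigenbasis of \<open>A\<close>,
  with \<open>A \<chi>_S = (D - 2|S|) \<chi>_S\<close>; hence \<open>E_1V\<close> is spanned by the \<open>\<chi>_{m}\<close>.  An antisymmetric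
  \<open>A\<close>-like matrix \<open>B\<close> commutes with \<open>A\<close>, so it preserves \<open>E_1V\<close> and is skew there.  Comparing
  diagonals of \<open>AB = BA\<close> shows that the rows of \<open>B\<close> sum to zero, and then
  \<open>B \<chi>_{m}(x) = -2 \<chi>_{m}(x) B(x, x + e_m)\<close>: the restriction of \<open>B\<close> to \<open>E_1V\<close> determines every
  edge entry, so restriction is injective.  Conversely a skew \<open>T\<close> with matrix \<open>(t_jk)\<close> in the
  basis \<open>\<chi>_{j}\<close> is the restriction of the matrix with entries
  \<open>B(x, x + e_k) = -1/2 \<Sum>_j t_jk \<chi>_{j}(x) \<chi>_{k}(x)\<close> on the edges; the antisymmetry of \<open>t\<close>
  makes this matrix antisymmetric and makes it commute with \<open>A\<close>, square by square of the cube.\<close>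

section \<open>The hypercube\<close>

definition flip :: "nat \<Rightarrow> vtx \<Rightarrow> vtx" where
  "flip i x = x[i := \<not> x ! i]"

lemma finite_hcube [simp]: "finite (hcube D)"
proof -
  have "hcube D = {xs. set xs \<subseteq> (UNIV :: bool set) \<and> length xs = D}"
    by (auto simp: hcube_def)
  then show ?thesis using finite_lists_length_eq[of "UNIV :: bool set" D] by simp
qed

lemma length_flip [simp]: "length (flip i x) = length x"
  by (simp add: flip_def)

lemma flip_in_hcube_iff [simp]: "flip i x \<in> hcube D \<longleftrightarrow> x \<in> hcube D"
  by (simp add: hcube_def)

lemma nth_flip: "i < length x \<Longrightarrow> flip i x ! j = (if j = i then \<not> x ! i else x ! j)"
  by (auto simp: flip_def)

lemma flip_flip [simp]: "flip i (flip i x) = x"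
  by (cases "i < length x") (auto simp: flip_def list_update_beyond)

lemma flip_commute: "flip i (flip k x) = flip k (flip i x)"
  unfolding flip_def
  by (cases "i < length x"; cases "k < length x"; cases "i = k")
    (auto simp: list_update_swap nth_list_update)

lemma flip_eq_flip_iff:
  assumes "i < length x" "k < length x"
  shows "flip i x = flip k x \<longleftrightarrow> i = k"
proof
  assume "flip i x = flip k x"
  then have "flip i x ! i = flip k x ! i" by simp
  then show "i = k" using assms by (auto simp: nth_flip split: if_splits)
qed simp

lemma hadj_sym: "hadj D x y = hadj D y x"
proof -
  have "{i. i < D \<and> x ! i \<noteq> y ! i} = {i. i < D \<and> y ! i \<noteq> x ! i}" by auto
  then show ?thesis unfolding hadj_def by auto
qed

lemma adjmat_sym: "adjmat D x y = adjmat D y x"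
  by (simp add: adjmat_def hadj_sym)

lemma hadj_iff_flip:
  assumes x: "x \<in> hcube D"
  shows "hadj D x y \<longleftrightarrow> (\<exists>i<D. y = flip i x)"
proof
  assume "hadj D x y"
  then have y: "y \<in> hcube D" and "card {i. i < D \<and> x ! i \<noteq> y ! i} = 1"
    by (auto simp: hadj_def)
  then obtain j where j: "{i. i < D \<and> x ! i \<noteq> y ! i} = {j}" by (meson card_1_singletonE)
  then have jD: "j < D" by auto
  have "y = flip j x"
  proof (rule nth_equalityI)
    show "length y = length (flip j x)" using x y by (simp add: hcube_def)
    fix i assume "i < length y"
    then have "i < D" using y by (simp add: hcube_def)
    then have "x ! i \<noteq> y ! i \<longleftrightarrow> i = j" using j by blast
    then show "y ! i = flip j x ! i" using jD x by (auto simp: nth_flip hcube_def)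
  qed
  then show "\<exists>i<D. y = flip i x" using jD by blast
next
  assume "\<exists>i<D. y = flip i x"
  then obtain i where i: "i < D" "y = flip i x" by blast
  with x have "{k. k < D \<and> x ! k \<noteq> y ! k} = {i}" by (auto simp: nth_flip hcube_def)
  then show "hadj D x y" using x i by (simp add: hadj_def)
qed

lemma adjmat_flip:
  assumes "x \<in> hcube D" "i < D"
  shows "adjmat D x (flip i x) = 1" and "adjmat D (flip i x) x = 1"
  using assms by (auto simp: adjmat_def hadj_iff_flip hadj_sym[of D "flip i x"])

lemma sum_hcube_neighbours:
  assumes x: "x \<in> hcube D" and g: "\<And>y. y \<in> hcube D \<Longrightarrow> \<not> hadj D x y \<Longrightarrow> g y = 0"
  shows "(\<Sum>y\<in>hcube D. g y) = (\<Sum>i<D. g (flip i x))"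
proof -
  have "(\<Sum>y\<in>hcube D. g y) = (\<Sum>y\<in>(\<lambda>i. flip i x) ` {..<D}. g y)"
    by (rule sum.mono_neutral_right) (use x g hadj_iff_flip[OF x] in auto)
  also have "\<dots> = (\<Sum>i<D. g (flip i x))"
    by (rule sum.reindex_cong[where l="\<lambda>i. flip i x"])
      (use x in \<open>auto simp: inj_on_def flip_eq_flip_iff hcube_def\<close>)
  finally show ?thesis .
qed

lemma mulvec_adjmat:
  assumes "x \<in> hcube D"
  shows "mulvec D (adjmat D) v x = (\<Sum>i<D. v (flip i x))"
proof -
  have "mulvec D (adjmat D) v x = (\<Sum>i<D. adjmat D x (flip i x) * v (flip i x))"
    unfolding mulvec_def using assms by (simp add: sum_hcube_neighbours adjmat_def)
  then show ?thesis using assms by (simp add: adjmat_flip)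
qed

lemma matmul_adjmat_right:
  assumes "x \<in> hcube D" "y \<in> hcube D"
  shows "matmul D B (adjmat D) x y = (\<Sum>i<D. B x (flip i y))"
proof -
  have "matmul D B (adjmat D) x y = (\<Sum>i<D. B x (flip i y) * adjmat D y (flip i y))"
    unfolding matmul_def adjmat_sym[of D _ y] using assms
    by (simp add: sum_hcube_neighbours adjmat_def)
  then show ?thesis using assms by (simp add: adjmat_flip)
qed

lemma matmul_adjmat_left:
  assumes "x \<in> hcube D" "y \<in> hcube D"
  shows "matmul D (adjmat D) B x y = (\<Sum>i<D. B (flip i x) y)"
proof -
  have "matmul D (adjmat D) B x y = (\<Sum>i<D. adjmat D x (flip i x) * B (flip i x) y)"
    unfolding matmul_def using assms by (simp add: sum_hcube_neighbours adjmat_def)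
  then show ?thesis using assms by (simp add: adjmat_flip)
qed

section \<open>Characters\<close>

definition bit_sign :: "bool \<Rightarrow> real" where
  "bit_sign b = (if b then -1 else 1)"

definition chi :: "nat \<Rightarrow> nat set \<Rightarrow> vec" where
  "chi D S x = (if length x = D then (\<Prod>i\<in>S. bit_sign (x ! i)) else 0)"

lemma bit_sign_sq [simp]: "bit_sign b * bit_sign b = 1"
  by (simp add: bit_sign_def)

lemma chi_notin_hcube: "x \<notin> hcube D \<Longrightarrow> chi D S x = 0"
  by (simp add: chi_def hcube_def)

lemma chi_singleton_sq: "x \<in> hcube D \<Longrightarrow> chi D {m} x * chi D {m} x = 1"
  by (simp add: chi_def bit_sign_def hcube_def)

lemma chi_flip:
  assumes x: "x \<in> hcube D" and i: "i < D" and S: "finite S"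
  shows "chi D S (flip i x) = (if i \<in> S then - chi D S x else chi D S x)"
proof -
  have il: "i < length x" and lx: "length x = D" using x i by (auto simp: hcube_def)
  have rest: "(\<Prod>j\<in>S - {i}. bit_sign (flip i x ! j)) = (\<Prod>j\<in>S - {i}. bit_sign (x ! j))"
    by (rule prod.cong) (auto simp: nth_flip il)
  show ?thesis
  proof (cases "i \<in> S")
    case True
    have "(\<Prod>j\<in>S. bit_sign (flip i x ! j)) = bit_sign (flip i x ! i) * (\<Prod>j\<in>S - {i}. bit_sign (x ! j))"
      using True S rest by (simp add: prod.remove)
    also have "\<dots> = - (\<Prod>j\<in>S. bit_sign (x ! j))"
      using True S il by (simp add: prod.remove[of S i] nth_flip bit_sign_def)
    finally show ?thesis using True lx by (simp add: chi_def)
  next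
    case False
    then show ?thesis
      using rest lx by (simp add: chi_def)
  qed
qed

lemma chi_singleton_flip:
  "x \<in> hcube D \<Longrightarrow> i < D \<Longrightarrow>
    chi D {m} (flip i x) = (if i = m then - chi D {m} x else chi D {m} x)"
  using chi_flip[of x D i "{m}"] by auto

text \<open>Expand \<open>\<Prod>i<D. (1 + sign x_i * sign y_i)\<close> over the subsets of the coordinates.\<close>
lemma sum_chi_mult_chi:
  assumes x: "x \<in> hcube D" and y: "y \<in> hcube D"
  shows "(\<Sum>S\<in>Pow {..<D}. chi D S x * chi D S y) = (if x = y then 2 ^ D else 0)"
proof -
  have lx: "length x = D" and ly: "length y = D" using x y by (auto simp: hcube_def)
  have "(\<Sum>S\<in>Pow {..<D}. chi D S x * chi D S y)
      = (\<Sum>S\<in>Pow {..<D}. (\<Prod>i\<in>S. bit_sign (x ! i) * bit_sign (y ! i)) * (\<Prod>i\<in>{..<D} - S. 1))"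
    by (rule sum.cong) (auto simp: chi_def lx ly prod.distrib)
  also have "\<dots> = (\<Prod>i<D. bit_sign (x ! i) * bit_sign (y ! i) + 1)"
    by (rule prod_add[symmetric]) simp
  also have "\<dots> = (if x = y then 2 ^ D else 0)"
  proof (cases "x = y")
    case False
    have "\<exists>i<D. x ! i \<noteq> y ! i"
    proof (rule ccontr)
      assume "\<not> (\<exists>i<D. x ! i \<noteq> y ! i)"
      then have "x = y" using lx ly by (auto intro: nth_equalityI)
      then show False using False by simp
    qed
    then obtain i where "i < D" "x ! i \<noteq> y ! i" by blast
    then have "\<exists>i\<in>{..<D}. bit_sign (x ! i) * bit_sign (y ! i) + 1 = 0"
      by (auto simp: bit_sign_def)
    then show ?thesis using False by simp
  qed simp
  finally show ?thesis .
qed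

lemma fourier_inversion:
  assumes x: "x \<in> hcube D"
  shows "v x = (\<Sum>S\<in>Pow {..<D}. inprod D v (chi D S) * chi D S x) / 2 ^ D"
proof -
  have "(\<Sum>S\<in>Pow {..<D}. inprod D v (chi D S) * chi D S x)
      = (\<Sum>S\<in>Pow {..<D}. \<Sum>y\<in>hcube D. v y * (chi D S y * chi D S x))"
    by (simp add: inprod_def sum_distrib_right mult.assoc)
  also have "\<dots> = (\<Sum>y\<in>hcube D. v y * (\<Sum>S\<in>Pow {..<D}. chi D S y * chi D S x))"
    by (subst sum.swap) (simp add: sum_distrib_left)
  also have "\<dots> = (\<Sum>y\<in>hcube D. if y = x then v y * 2 ^ D else 0)"
    by (rule sum.cong) (auto simp: sum_chi_mult_chi x)
  also have "\<dots> = v x * 2 ^ D" using x by simp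
  finally show ?thesis by simp
qed

lemma mulvec_adjmat_chi:
  assumes S: "S \<subseteq> {..<D}"
  shows "mulvec D (adjmat D) (chi D S) = (\<lambda>x. (real D - 2 * real (card S)) * chi D S x)"
proof
  fix x
  show "mulvec D (adjmat D) (chi D S) x = (real D - 2 * real (card S)) * chi D S x"
  proof (cases "x \<in> hcube D")
    case False
    then show ?thesis by (simp add: mulvec_def chi_notin_hcube)
  next
    case x: True
    have fS: "finite S" using S finite_subset by blast
    have "mulvec D (adjmat D) (chi D S) x = (\<Sum>i<D. chi D S x - (if i \<in> S then 2 * chi D S x else 0))"
      unfolding mulvec_adjmat[OF x] by (rule sum.cong) (auto simp: chi_flip[OF x _ fS])
    also have "\<dots> = real D * chi D S x - real (card S) * (2 * chi D S x)"
      using S by (simp add: sum_subtractf sum.If_cases Int_absorb1)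
    finally show ?thesis by (simp add: algebra_simps)
  qed
qed

lemma chi_singleton_in_E1: "m < D \<Longrightarrow> chi D {m} \<in> E1 D"
  using mulvec_adjmat_chi[of "{m}" D] by (auto simp: E1_def is_vec_def chi_notin_hcube)

lemma inprod_commute: "inprod D v w = inprod D w v"
  by (simp add: inprod_def mult.commute)

lemma inprod_scale_left: "inprod D (\<lambda>x. c * v x) w = c * inprod D v w"
  by (simp add: inprod_def sum_distrib_left mult.assoc)

lemma inprod_mulvec_adjmat:
  "inprod D (mulvec D (adjmat D) v) w = inprod D v (mulvec D (adjmat D) w)"
proof -
  have "inprod D (mulvec D (adjmat D) v) w = (\<Sum>x\<in>hcube D. \<Sum>y\<in>hcube D. adjmat D x y * v y * w x)"
    by (simp add: inprod_def mulvec_def sum_distrib_right)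
  also have "\<dots> = (\<Sum>y\<in>hcube D. \<Sum>x\<in>hcube D. adjmat D y x * w x * v y)"
    by (subst sum.swap) (simp add: adjmat_sym mult.commute mult.left_commute)
  also have "\<dots> = inprod D v (mulvec D (adjmat D) w)"
    by (simp add: inprod_def mulvec_def sum_distrib_right sum_distrib_left
        mult.commute mult.left_commute)
  finally show ?thesis .
qed

text \<open>Eigenvectors of the symmetric matrix \<open>A\<close> for distinct eigenvalues are orthogonal.\<close>
lemma E1_inprod_chi:
  assumes v: "v \<in> E1 D" and S: "S \<subseteq> {..<D}" and card: "card S \<noteq> 1"
  shows "inprod D v (chi D S) = 0"
proof -
  have "(real D - 2) * inprod D v (chi D S) = inprod D (mulvec D (adjmat D) v) (chi D S)"
    using v by (simp add: E1_def inprod_scale_left)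
  also have "\<dots> = inprod D v (mulvec D (adjmat D) (chi D S))"
    by (rule inprod_mulvec_adjmat)
  also have "\<dots> = (real D - 2 * real (card S)) * inprod D v (chi D S)"
    by (simp add: mulvec_adjmat_chi[OF S] inprod_commute[of D v] inprod_scale_left)
  finally have "(2 * real (card S) - 2) * inprod D v (chi D S) = 0"
    by (simp add: algebra_simps)
  then show ?thesis using card by simp
qed

lemma E1_chi_expansion:
  assumes v: "v \<in> E1 D"
  shows "v = (\<lambda>x. \<Sum>m<D. inprod D v (chi D {m}) / 2 ^ D * chi D {m} x)"
proof
  fix x
  show "v x = (\<Sum>m<D. inprod D v (chi D {m}) / 2 ^ D * chi D {m} x)"
  proof (cases "x \<in> hcube D")
    case False
    then show ?thesis using v by (simp add: E1_def is_vec_def chi_notin_hcube)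
  next
    case x: True
    have "(\<Sum>S\<in>Pow {..<D}. inprod D v (chi D S) * chi D S x)
        = (\<Sum>S\<in>(\<lambda>m. {m}) ` {..<D}. inprod D v (chi D S) * chi D S x)"
    proof (rule sum.mono_neutral_right)
      show "\<forall>S\<in>Pow {..<D} - (\<lambda>m. {m}) ` {..<D}. inprod D v (chi D S) * chi D S x = 0"
      proof
        fix S assume S: "S \<in> Pow {..<D} - (\<lambda>m. {m}) ` {..<D}"
        have "card S \<noteq> 1"
        proof
          assume "card S = 1"
          then obtain m where "S = {m}" by (rule card_1_singletonE)
          then show False using S by auto
        qed
        then show "inprod D v (chi D S) * chi D S x = 0" using E1_inprod_chi[OF v] S by auto
      qed
    qed auto
    also have "\<dots> = (\<Sum>m<D. inprod D v (chi D {m}) * chi D {m} x)"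
      by (rule sum.reindex_cong[where l = "\<lambda>m. {m}"]) auto
    finally show ?thesis using fourier_inversion[OF x, of v] by (simp add: sum_divide_distrib)
  qed
qed

lemma mulvec_mulvec: "mulvec D C (mulvec D E v) = mulvec D (matmul D C E) v"
proof
  fix x
  show "mulvec D C (mulvec D E v) x = mulvec D (matmul D C E) v x"
  proof (cases "x \<in> hcube D")
    case True
    have "mulvec D C (mulvec D E v) x = (\<Sum>y\<in>hcube D. \<Sum>z\<in>hcube D. C x y * E y z * v z)"
      using True by (simp add: mulvec_def sum_distrib_left mult.assoc)
    also have "\<dots> = (\<Sum>z\<in>hcube D. \<Sum>y\<in>hcube D. C x y * E y z * v z)"
      by (rule sum.swap)
    also have "\<dots> = mulvec D (matmul D C E) v x"
      using True by (auto simp: mulvec_def matmul_def sum_distrib_right intro!: sum.cong)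
    finally show ?thesis .
  qed (simp add: mulvec_def)
qed

lemma mulvec_scale: "mulvec D B (\<lambda>x. c * v x) = (\<lambda>x. c * mulvec D B v x)"
  by (auto simp: mulvec_def sum_distrib_left mult.left_commute)

lemma mulvec_add: "mulvec D B (\<lambda>x. u x + w x) = (\<lambda>x. mulvec D B u x + mulvec D B w x)"
  by (auto simp: mulvec_def distrib_left sum.distrib)

lemma mulvec_sum:
  "mulvec D B (\<lambda>x. \<Sum>j\<in>J. a j * g j x) = (\<lambda>x. \<Sum>j\<in>J. a j * mulvec D B (g j) x)"
proof
  fix x
  show "mulvec D B (\<lambda>x. \<Sum>j\<in>J. a j * g j x) x = (\<Sum>j\<in>J. a j * mulvec D B (g j) x)"
  proof (cases "x \<in> hcube D")
    case True
    have "mulvec D B (\<lambda>x. \<Sum>j\<in>J. a j * g j x) x = (\<Sum>y\<in>hcube D. \<Sum>j\<in>J. B x y * (a j * g j y))"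
      using True by (simp add: mulvec_def sum_distrib_left)
    also have "\<dots> = (\<Sum>j\<in>J. \<Sum>y\<in>hcube D. B x y * (a j * g j y))"
      by (rule sum.swap)
    also have "\<dots> = (\<Sum>j\<in>J. a j * mulvec D B (g j) x)"
      using True by (simp add: mulvec_def sum_distrib_left mult.left_commute)
    finally show ?thesis .
  qed (simp add: mulvec_def)
qed

lemma E1_add: "u \<in> E1 D \<Longrightarrow> w \<in> E1 D \<Longrightarrow> (\<lambda>x. u x + w x) \<in> E1 D"
  by (auto simp: E1_def is_vec_def mulvec_add algebra_simps)

lemma E1_scale: "u \<in> E1 D \<Longrightarrow> (\<lambda>x. c * u x) \<in> E1 D"
  by (auto simp: E1_def is_vec_def mulvec_scale algebra_simps)

lemma E1_zero: "(\<lambda>x. 0) \<in> E1 D"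
  by (auto simp: E1_def is_vec_def mulvec_def)

lemma E1_sum:
  "finite J \<Longrightarrow> (\<And>j. j \<in> J \<Longrightarrow> g j \<in> E1 D) \<Longrightarrow> (\<lambda>x. \<Sum>j\<in>J. a j * g j x) \<in> E1 D"
proof (induction J rule: finite_induct)
  case (insert j J)
  then show ?case
    using E1_add[OF E1_scale[of "g j" D "a j"], of "\<lambda>x. \<Sum>j\<in>J. a j * g j x"] by simp
qed (simp add: E1_zero)

section \<open>Antisymmetric \<open>A\<close>-like matrices\<close>

lemma inprod_mulvec_antisym:
  assumes "antisym_mat D B"
  shows "inprod D (mulvec D B u) w = - inprod D u (mulvec D B w)"
proof -
  have "inprod D (mulvec D B u) w = (\<Sum>x\<in>hcube D. \<Sum>y\<in>hcube D. B x y * u y * w x)"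
    by (simp add: inprod_def mulvec_def sum_distrib_right)
  also have "\<dots> = (\<Sum>y\<in>hcube D. \<Sum>x\<in>hcube D. B x y * u y * w x)"
    by (rule sum.swap)
  also have "\<dots> = (\<Sum>y\<in>hcube D. \<Sum>x\<in>hcube D. - (u y * (B y x * w x)))"
  proof (intro sum.cong refl)
    fix x y assume "x \<in> hcube D" "y \<in> hcube D"
    then have "B x y = - B y x" using assms unfolding antisym_mat_def by blast
    then show "B x y * u y * w x = - (u y * (B y x * w x))" by simp
  qed
  also have "\<dots> = - inprod D u (mulvec D B w)"
    by (simp add: inprod_def mulvec_def sum_distrib_left sum_negf)
  finally show ?thesis .
qed

context
  fixes D :: nat and B :: mat
  assumes B: "B \<in> antisym_A_like D"
begin

lemma antisym_A_like_swap: "x \<in> hcube D \<Longrightarrow> y \<in> hcube D \<Longrightarrow> B y x = - B x y"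
  using B unfolding antisym_A_like_def antisym_mat_def by blast

lemma antisym_A_like_off_edges:
  assumes x: "x \<in> hcube D" and y: "y \<in> hcube D" and nadj: "\<not> hadj D x y"
  shows "B x y = 0"
proof (cases "x = y")
  case True
  have "B x x = - B x x" using antisym_A_like_swap[OF x x] .
  then show ?thesis using True by simp
next
  case False
  then show ?thesis using B x y nadj unfolding antisym_A_like_def A_like_def by blast
qed

text \<open>Comparing the diagonal entries of \<open>BA\<close> and \<open>AB\<close>: the antisymmetry of \<open>B\<close> makes
  the two row sums opposite.\<close>
lemma antisym_A_like_row_sum:
  assumes x: "x \<in> hcube D"
  shows "(\<Sum>i<D. B x (flip i x)) = 0"
proof -
  have "matmul D B (adjmat D) = matmul D (adjmat D) B"
    using B by (simp add: antisym_A_like_def A_like_def)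
  then have "matmul D B (adjmat D) x x = matmul D (adjmat D) B x x" by simp
  then have "(\<Sum>i<D. B x (flip i x)) = (\<Sum>i<D. B (flip i x) x)"
    by (simp add: matmul_adjmat_left[OF x x] matmul_adjmat_right[OF x x])
  also have "\<dots> = (\<Sum>i<D. - B x (flip i x))"
    by (intro sum.cong refl antisym_A_like_swap) (use x in auto)
  also have "\<dots> = - (\<Sum>i<D. B x (flip i x))"
    by (simp add: sum_negf)
  finally show ?thesis by simp
qed

lemma mulvec_antisym_A_like:
  assumes x: "x \<in> hcube D"
  shows "mulvec D B v x = (\<Sum>i<D. B x (flip i x) * v (flip i x))"
  unfolding mulvec_def using x
  by (simp add: sum_hcube_neighbours antisym_A_like_off_edges)

lemma mulvec_antisym_A_like_chi:
  assumes x: "x \<in> hcube D" and m: "m < D"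
  shows "mulvec D B (chi D {m}) x = - 2 * chi D {m} x * B x (flip m x)"
proof -
  have "mulvec D B (chi D {m}) x
      = (\<Sum>i<D. chi D {m} x * B x (flip i x) - (if i = m then 2 * chi D {m} x * B x (flip i x) else 0))"
    using x by (auto simp: mulvec_antisym_A_like chi_singleton_flip intro!: sum.cong)
  also have "\<dots> = chi D {m} x * (\<Sum>i<D. B x (flip i x)) - 2 * chi D {m} x * B x (flip m x)"
    using m by (simp add: sum_subtractf sum_distrib_left)
  finally show ?thesis using antisym_A_like_row_sum[OF x] by simp
qed

lemma antisym_A_like_preserves_E1:
  assumes v: "v \<in> E1 D"
  shows "mulvec D B v \<in> E1 D"
proof -
  have "mulvec D (adjmat D) (mulvec D B v) = mulvec D B (mulvec D (adjmat D) v)"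
    using B by (simp add: antisym_A_like_def A_like_def mulvec_mulvec)
  also have "\<dots> = (\<lambda>x. (real D - 2) * mulvec D B v x)"
    using v by (simp add: E1_def mulvec_scale)
  finally show ?thesis by (simp add: E1_def is_vec_def mulvec_def)
qed

end

lemma antisym_A_like_eqI:
  assumes B1: "B1 \<in> antisym_A_like D" and B2: "B2 \<in> antisym_A_like D"
    and eq: "\<And>m. m < D \<Longrightarrow> mulvec D B1 (chi D {m}) = mulvec D B2 (chi D {m})"
  shows "B1 = B2"
proof (intro ext)
  fix x y
  show "B1 x y = B2 x y"
  proof (cases "x \<in> hcube D \<and> y \<in> hcube D")
    case False
    then show ?thesis using B1 B2 by (auto simp: antisym_A_like_def is_mat_def)
  next
    case True
    then have x: "x \<in> hcube D" and y: "y \<in> hcube D" by auto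
    show ?thesis
    proof (cases "hadj D x y")
      case True
      then obtain m where m: "m < D" "y = flip m x" using hadj_iff_flip[OF x] by blast
      have "- 2 * chi D {m} x * B1 x (flip m x) = - 2 * chi D {m} x * B2 x (flip m x)"
        using eq[OF m(1)] mulvec_antisym_A_like_chi[OF B1 x m(1)]
          mulvec_antisym_A_like_chi[OF B2 x m(1)] by metis
      moreover have "chi D {m} x \<noteq> 0" using chi_singleton_sq[OF x, of m] by auto
      ultimately show ?thesis using m by simp
    next
      case False
      then show ?thesis using antisym_A_like_off_edges[OF B1 x y] antisym_A_like_off_edges[OF B2 x y]
        by simp
    qed
  qed
qed

section \<open>Matrices supported on the edges\<close>

lemma double_sum_offdiag_cancel:
  fixes g :: "'a \<Rightarrow> 'a \<Rightarrow> 'b :: field_char_0"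
  assumes I: "finite I" and offdiag: "\<And>i k. i \<in> I \<Longrightarrow> k \<in> I \<Longrightarrow> i \<noteq> k \<Longrightarrow> g i k + g k i = 0"
  shows "(\<Sum>i\<in>I. \<Sum>k\<in>I. g i k) = (\<Sum>k\<in>I. g k k)"
proof -
  have "2 * (\<Sum>i\<in>I. \<Sum>k\<in>I. g i k) = (\<Sum>i\<in>I. \<Sum>k\<in>I. g i k) + (\<Sum>k\<in>I. \<Sum>i\<in>I. g i k)"
    by (simp add: sum.swap[of g I I])
  also have "\<dots> = (\<Sum>i\<in>I. \<Sum>k\<in>I. g i k + g k i)"
    by (simp add: sum.distrib)
  also have "\<dots> = (\<Sum>i\<in>I. \<Sum>k\<in>I. if i = k then 2 * g k k else 0)"
    by (intro sum.cong refl) (simp add: offdiag)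
  also have "\<dots> = 2 * (\<Sum>k\<in>I. g k k)"
    using I by (simp add: sum_distrib_left)
  finally show ?thesis by simp
qed

definition edge_mat :: "nat \<Rightarrow> (vtx \<Rightarrow> nat \<Rightarrow> real) \<Rightarrow> mat" where
  "edge_mat D w x y =
     (if x \<in> hcube D \<and> y \<in> hcube D then (\<Sum>k<D. if y = flip k x then w x k else 0) else 0)"

lemma edge_mat_flip:
  assumes x: "x \<in> hcube D" and k: "k < D"
  shows "edge_mat D w x (flip k x) = w x k"
proof -
  have "length x = D" using x by (simp add: hcube_def)
  then have "edge_mat D w x (flip k x) = (\<Sum>i<D. if i = k then w x i else 0)"
    unfolding edge_mat_def using x k by (auto intro!: sum.cong simp: flip_eq_flip_iff)
  then show ?thesis using k by simp
qed

lemma edge_mat_off_edges: "x \<in> hcube D \<Longrightarrow> \<not> hadj D x y \<Longrightarrow> edge_mat D w x y = 0"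
  by (auto simp: edge_mat_def hadj_iff_flip)

lemma edge_mat_antisym_mat:
  assumes "\<And>x k. x \<in> hcube D \<Longrightarrow> k < D \<Longrightarrow> w (flip k x) k = - w x k"
  shows "antisym_mat D (edge_mat D w)"
  unfolding antisym_mat_def
proof (intro ballI)
  fix x y assume x: "x \<in> hcube D" and y: "y \<in> hcube D"
  show "edge_mat D w y x = - edge_mat D w x y"
  proof (cases "hadj D x y")
    case True
    then obtain k where k: "k < D" "y = flip k x" using hadj_iff_flip[OF x] by blast
    then show ?thesis
      using assms edge_mat_flip[OF x k(1)] edge_mat_flip[OF y k(1)] x by simp
  next
    case False
    then show ?thesis
      using edge_mat_off_edges x y hadj_sym[of D x y] by simp
  qed
qed

lemma matmul_edge_mat_adjmat:
  assumes "x \<in> hcube D" "y \<in> hcube D"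
  shows "matmul D (edge_mat D w) (adjmat D) x y
    = (\<Sum>i<D. \<Sum>k<D. if y = flip i (flip k x) then w x k else 0)"
proof -
  have "flip i y = flip k x \<longleftrightarrow> y = flip i (flip k x)" for i k
    by (metis flip_flip)
  then show ?thesis
    using assms by (simp add: matmul_adjmat_right edge_mat_def)
qed

lemma matmul_adjmat_edge_mat:
  assumes "x \<in> hcube D" "y \<in> hcube D"
  shows "matmul D (adjmat D) (edge_mat D w) x y
    = (\<Sum>i<D. \<Sum>k<D. if y = flip i (flip k x) then w (flip k x) i else 0)"
proof -
  have "matmul D (adjmat D) (edge_mat D w) x y
      = (\<Sum>k<D. \<Sum>i<D. if y = flip i (flip k x) then w (flip k x) i else 0)"
    using assms by (simp add: matmul_adjmat_left edge_mat_def)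
  also have "\<dots> = (\<Sum>i<D. \<Sum>k<D. if y = flip i (flip k x) then w (flip k x) i else 0)"
    by (rule sum.swap)
  finally show ?thesis .
qed

text \<open>An entry of \<open>BA\<close> or \<open>AB\<close> sums over the paths of length two from \<open>x\<close> to \<open>y\<close>; \<open>BA\<close>
  weighs such a path by its first edge, \<open>AB\<close> by its second.  Commutation therefore amounts to
  an identity for the returning paths (\<open>diag\<close>) and one for each square of the cube
  (\<open>square\<close>).\<close>
lemma edge_mat_commutes_adjmat:
  assumes diag: "\<And>x. x \<in> hcube D \<Longrightarrow> (\<Sum>k<D. w (flip k x) k) = (\<Sum>k<D. w x k)"
    and square: "\<And>x i k. x \<in> hcube D \<Longrightarrow> i < D \<Longrightarrow> k < D \<Longrightarrow> i \<noteq> k \<Longrightarrow>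
        w (flip k x) i + w (flip i x) k = w x i + w x k"
  shows "matmul D (edge_mat D w) (adjmat D) = matmul D (adjmat D) (edge_mat D w)"
proof (intro ext)
  fix x y
  show "matmul D (edge_mat D w) (adjmat D) x y = matmul D (adjmat D) (edge_mat D w) x y"
  proof (cases "x \<in> hcube D \<and> y \<in> hcube D")
    case True
    then have x: "x \<in> hcube D" and y: "y \<in> hcube D" by auto
    let ?g = "\<lambda>i k. if y = flip i (flip k x) then w (flip k x) i - w x k else 0"
    have "(\<Sum>i<D. \<Sum>k<D. ?g i k) = (\<Sum>k<D. ?g k k)"
    proof (rule double_sum_offdiag_cancel)
      fix i k assume "i \<in> {..<D}" "k \<in> {..<D}" "i \<noteq> k"
      then show "?g i k + ?g k i = 0"
        using square[OF x, of i k] by (auto simp: flip_commute[of k i])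
    qed simp
    also have "\<dots> = 0"
      using diag[OF x] by (cases "y = x") (simp_all add: sum_subtractf)
    moreover have "(\<Sum>i<D. \<Sum>k<D. ?g i k)
        = matmul D (adjmat D) (edge_mat D w) x y - matmul D (edge_mat D w) (adjmat D) x y"
      unfolding matmul_edge_mat_adjmat[OF x y] matmul_adjmat_edge_mat[OF x y]
        sum_subtractf[symmetric]
      by (intro sum.cong refl) simp
    ultimately show ?thesis by simp
  qed (auto simp: matmul_def)
qed

definition char_weight :: "nat \<Rightarrow> (nat \<Rightarrow> nat \<Rightarrow> real) \<Rightarrow> vtx \<Rightarrow> nat \<Rightarrow> real" where
  "char_weight D c x k = (\<Sum>j<D. c j k * chi D {j} x) * chi D {k} x"

context
  fixes D :: nat and c :: "nat \<Rightarrow> nat \<Rightarrow> real"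
  assumes skew: "\<And>j k. j < D \<Longrightarrow> k < D \<Longrightarrow> c j k = - c k j"
begin

lemma char_weight_flip:
  assumes x: "x \<in> hcube D" and i: "i < D" and k: "k < D"
  shows "char_weight D c (flip i x) k =
    (if i = k then - char_weight D c x k
     else char_weight D c x k - 2 * c i k * chi D {i} x * chi D {k} x)"
proof (cases "i = k")
  case True
  have "c k k = 0" using skew[OF k k] by simp
  then have "(\<Sum>j<D. c j k * chi D {j} (flip k x)) = (\<Sum>j<D. c j k * chi D {j} x)"
    by (intro sum.cong refl) (auto simp: chi_singleton_flip[OF x k])
  then show ?thesis using True by (simp add: char_weight_def chi_singleton_flip[OF x k])
next
  case False
  have "(\<Sum>j<D. c j k * chi D {j} (flip i x))
      = (\<Sum>j<D. c j k * chi D {j} x - (if j = i then 2 * c j k * chi D {j} x else 0))"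
    by (intro sum.cong refl) (auto simp: chi_singleton_flip[OF x i])
  also have "\<dots> = (\<Sum>j<D. c j k * chi D {j} x) - 2 * c i k * chi D {i} x"
    using i by (simp add: sum_subtractf)
  finally have sum_flip: "(\<Sum>j<D. c j k * chi D {j} (flip i x))
      = (\<Sum>j<D. c j k * chi D {j} x) - 2 * c i k * chi D {i} x" .
  have "chi D {k} (flip i x) = chi D {k} x"
    using False by (simp add: chi_singleton_flip[OF x i])
  with False show ?thesis
    by (simp only: char_weight_def sum_flip if_False) (simp add: algebra_simps)
qed

lemma sum_char_weight: "(\<Sum>k<D. char_weight D c x k) = 0"
proof -
  have "(\<Sum>k<D. char_weight D c x k) = (\<Sum>k<D. \<Sum>j<D. c j k * chi D {j} x * chi D {k} x)"
    by (simp add: char_weight_def sum_distrib_right)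
  also have "\<dots> = (\<Sum>k<D. c k k * chi D {k} x * chi D {k} x)"
  proof (rule double_sum_offdiag_cancel)
    fix k j assume "k \<in> {..<D}" "j \<in> {..<D}"
    then show "c j k * chi D {j} x * chi D {k} x + c k j * chi D {k} x * chi D {j} x = 0"
      using skew[of j k] by (simp add: algebra_simps)
  qed simp
  also have "\<dots> = 0"
  proof (intro sum.neutral ballI)
    fix k assume "k \<in> {..<D}"
    then have "c k k = 0" using skew[of k k] by simp
    then show "c k k * chi D {k} x * chi D {k} x = 0" by simp
  qed
  finally show ?thesis .
qed

lemma edge_mat_char_weight_antisym_A_like: "edge_mat D (char_weight D c) \<in> antisym_A_like D"
proof -
  have "matmul D (edge_mat D (char_weight D c)) (adjmat D)
      = matmul D (adjmat D) (edge_mat D (char_weight D c))"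
  proof (rule edge_mat_commutes_adjmat)
    fix x assume x: "x \<in> hcube D"
    have "(\<Sum>k<D. char_weight D c (flip k x) k) = - (\<Sum>k<D. char_weight D c x k)"
      by (simp add: char_weight_flip[OF x] sum_negf)
    then show "(\<Sum>k<D. char_weight D c (flip k x) k) = (\<Sum>k<D. char_weight D c x k)"
      by (simp add: sum_char_weight)
  next
    fix x i k assume "x \<in> hcube D" "i < D" "k < D" "i \<noteq> k"
    then show "char_weight D c (flip k x) i + char_weight D c (flip i x) k
        = char_weight D c x i + char_weight D c x k"
      using skew[of i k] by (simp add: char_weight_flip algebra_simps)
  qed
  moreover have "antisym_mat D (edge_mat D (char_weight D c))"
    by (rule edge_mat_antisym_mat) (simp add: char_weight_flip)
  moreover have "is_mat D (edge_mat D (char_weight D c))"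
    by (simp add: is_mat_def edge_mat_def)
  ultimately show ?thesis
    by (simp add: antisym_A_like_def A_like_def edge_mat_off_edges)
qed

lemma mulvec_edge_mat_char_weight_chi:
  assumes m: "m < D"
  shows "mulvec D (edge_mat D (char_weight D c)) (chi D {m}) = (\<lambda>x. - 2 * (\<Sum>j<D. c j m * chi D {j} x))"
proof
  fix x
  show "mulvec D (edge_mat D (char_weight D c)) (chi D {m}) x = - 2 * (\<Sum>j<D. c j m * chi D {j} x)"
  proof (cases "x \<in> hcube D")
    case x: True
    have "mulvec D (edge_mat D (char_weight D c)) (chi D {m}) x
        = - 2 * (\<Sum>j<D. c j m * chi D {j} x) * (chi D {m} x * chi D {m} x)"
      by (simp add: mulvec_antisym_A_like_chi[OF edge_mat_char_weight_antisym_A_like x m]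
          edge_mat_flip[OF x m] char_weight_def)
    then show ?thesis by (simp add: chi_singleton_sq[OF x])
  qed (simp add: mulvec_def chi_notin_hcube)
qed

end

section \<open>Skew maps of \<open>E_1V\<close>\<close>

lemma restrict_mulvec_skew_map:
  assumes B: "B \<in> antisym_A_like D"
  shows "restrict (mulvec D B) (E1 D) \<in> skew_maps_E1 D"
proof -
  have "antisym_mat D B" using B by (simp add: antisym_A_like_def)
  then show ?thesis
    unfolding skew_maps_E1_def
    using antisym_A_like_preserves_E1[OF B] E1_add E1_scale
    by (simp add: Pi_def mulvec_add mulvec_scale inprod_mulvec_antisym)
qed

definition chi_coeff :: "nat \<Rightarrow> (vec \<Rightarrow> vec) \<Rightarrow> nat \<Rightarrow> nat \<Rightarrow> real" where
  "chi_coeff D T j k = inprod D (T (chi D {k})) (chi D {j}) / 2 ^ D"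

text \<open>The factor \<open>-1/2\<close> compensates the factor \<open>-2\<close> with which an antisymmetric
  \<open>A\<close>-like matrix acts on the characters of weight one.\<close>
definition lift_skew_map :: "nat \<Rightarrow> (vec \<Rightarrow> vec) \<Rightarrow> mat" where
  "lift_skew_map D T = edge_mat D (char_weight D (\<lambda>j k. - chi_coeff D T j k / 2))"

context
  fixes D :: nat and T :: "vec \<Rightarrow> vec"
  assumes T: "T \<in> skew_maps_E1 D"
begin

lemma skew_map_E1: "v \<in> E1 D \<Longrightarrow> T v \<in> E1 D"
  and skew_map_add: "u \<in> E1 D \<Longrightarrow> w \<in> E1 D \<Longrightarrow> T (\<lambda>x. u x + w x) = (\<lambda>x. T u x + T w x)"
  and skew_map_scale: "u \<in> E1 D \<Longrightarrow> T (\<lambda>x. c * u x) = (\<lambda>x. c * T u x)"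
  and skew_map_inprod: "u \<in> E1 D \<Longrightarrow> w \<in> E1 D \<Longrightarrow> inprod D (T u) w = - inprod D u (T w)"
  and skew_map_extensional: "v \<notin> E1 D \<Longrightarrow> T v = undefined"
  using T unfolding skew_maps_E1_def extensional_def by blast+

lemma skew_map_sum:
  "finite J \<Longrightarrow> (\<And>j. j \<in> J \<Longrightarrow> g j \<in> E1 D) \<Longrightarrow>
    T (\<lambda>x. \<Sum>j\<in>J. a j * g j x) = (\<lambda>x. \<Sum>j\<in>J. a j * T (g j) x)"
proof (induction J rule: finite_induct)
  case empty
  then show ?case
    using skew_map_scale[OF E1_zero, of 0] by simp
next
  case (insert j J)
  have gj: "g j \<in> E1 D" using insert.prems by simp
  have rest: "(\<lambda>x. \<Sum>j\<in>J. a j * g j x) \<in> E1 D"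
    using insert by (simp add: E1_sum)
  have "T (\<lambda>x. \<Sum>j\<in>insert j J. a j * g j x)
      = T (\<lambda>x. (\<lambda>x. a j * g j x) x + (\<lambda>x. \<Sum>j\<in>J. a j * g j x) x)"
    using insert by simp
  also have "\<dots> = (\<lambda>x. a j * T (g j) x + (\<Sum>j\<in>J. a j * T (g j) x))"
    using insert skew_map_add[OF E1_scale[OF gj] rest] by (simp add: skew_map_scale[OF gj])
  finally show ?case
    using insert by simp
qed

lemma chi_coeff_skew: "j < D \<Longrightarrow> k < D \<Longrightarrow> chi_coeff D T j k = - chi_coeff D T k j"
  using skew_map_inprod[OF chi_singleton_in_E1 chi_singleton_in_E1, of k j]
  by (simp add: chi_coeff_def inprod_commute[of D "chi D {k}"])

lemma half_chi_coeff_skew: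
  "j < D \<Longrightarrow> k < D \<Longrightarrow> - chi_coeff D T j k / 2 = - (- chi_coeff D T k j / 2)"
  using chi_coeff_skew[of j k] by simp

lemma skew_map_chi: "m < D \<Longrightarrow> T (chi D {m}) = (\<lambda>x. \<Sum>j<D. chi_coeff D T j m * chi D {j} x)"
  using E1_chi_expansion[OF skew_map_E1[OF chi_singleton_in_E1]] by (simp add: chi_coeff_def)

lemma lift_skew_map_antisym_A_like: "lift_skew_map D T \<in> antisym_A_like D"
  unfolding lift_skew_map_def
  by (rule edge_mat_char_weight_antisym_A_like[OF half_chi_coeff_skew])

lemma restrict_mulvec_lift_skew_map: "restrict (mulvec D (lift_skew_map D T)) (E1 D) = T"
proof
  fix v
  show "restrict (mulvec D (lift_skew_map D T)) (E1 D) v = T v"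
  proof (cases "v \<in> E1 D")
    case False
    then show ?thesis by (simp add: skew_map_extensional)
  next
    case True
    let ?a = "\<lambda>m. inprod D v (chi D {m}) / 2 ^ D"
    have chi: "mulvec D (lift_skew_map D T) (chi D {m}) = T (chi D {m})" if m: "m < D" for m
      using mulvec_edge_mat_char_weight_chi[OF half_chi_coeff_skew m]
      by (simp add: lift_skew_map_def skew_map_chi[OF m] sum_distrib_left)
    have v: "v = (\<lambda>x. \<Sum>m<D. ?a m * chi D {m} x)"
      by (rule E1_chi_expansion[OF True])
    have "mulvec D (lift_skew_map D T) v
        = (\<lambda>x. \<Sum>m<D. ?a m * mulvec D (lift_skew_map D T) (chi D {m}) x)"
      by (subst v, rule mulvec_sum)
    also have "\<dots> = (\<lambda>x. \<Sum>m<D. ?a m * T (chi D {m}) x)"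
      by (simp add: chi)
    also have "\<dots> = T (\<lambda>x. \<Sum>m<D. ?a m * chi D {m} x)"
      by (rule skew_map_sum[symmetric]) (simp_all add: chi_singleton_in_E1)
    also have "\<dots> = T v"
      using v by simp
    finally show ?thesis using True by simp
  qed
qed

end

theorem proposition9p9:
  fixes D :: nat
  assumes "D \<ge> 1"
  shows "(\<forall>B\<in>antisym_A_like D. \<forall>v\<in>E1 D. mulvec D B v \<in> E1 D) \<and>
         bij_betw (\<lambda>B. restrict (mulvec D B) (E1 D)) (antisym_A_like D) (skew_maps_E1 D)"
proof (intro conjI)
  show "\<forall>B\<in>antisym_A_like D. \<forall>v\<in>E1 D. mulvec D B v \<in> E1 D"
    using antisym_A_like_preserves_E1 by blast
  have "inj_on (\<lambda>B. restrict (mulvec D B) (E1 D)) (antisym_A_like D)"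
  proof (rule inj_onI)
    fix B1 B2
    assume "B1 \<in> antisym_A_like D" "B2 \<in> antisym_A_like D"
      and "restrict (mulvec D B1) (E1 D) = restrict (mulvec D B2) (E1 D)"
    then show "B1 = B2"
      by (metis antisym_A_like_eqI chi_singleton_in_E1 restrict_apply')
  qed
  moreover have "(\<lambda>B. restrict (mulvec D B) (E1 D)) ` antisym_A_like D = skew_maps_E1 D"
    using restrict_mulvec_skew_map restrict_mulvec_lift_skew_map lift_skew_map_antisym_A_like
    by (metis (no_types, lifting) image_iff subsetI subset_antisym)
  ultimately show "bij_betw (\<lambda>B. restrict (mulvec D B) (E1 D)) (antisym_A_like D) (skew_maps_E1 D)"
    by (simp add: bij_betw_def)
qed

end
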